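(* For every real number $\gamma>0$ there exists an approval-based committee election instance $(N,C,\mathbf{A},k)$ (with at least one cohesive group) whose maximum JR degree $c^\ast_{\mathrm{JR}}$ and maximum EJR degree $c^\ast_{\mathrm{EJR}}$ satisfy all of the following: (1) $c^\ast_{\mathrm{JR}}/c^\ast_{\mathrm{EJR}}>\gamma$; (2) every committee $W\subseteq C$ with $|W|=k$ whose EJR degree equals $c^\ast_{\mathrm{EJR}}$ has JR degree at most $c^\ast_{\mathrm{JR}}/\gamma$; (3) every committee $W\subseteq C$ with $|W|=k$ whose JR degree equals $c^\ast_{\mathrm{JR}}$ has EJR degree at most $c^\ast_{\mathrm{EJR}}/\gamma$.
   Context: An instance consists of a set of voters $N=\{1,\dots,n\}$, a set of candidates $C$, approval ballots $\mathbf{A}=(A_1,\dots,A_n)$ with $A_i\subseteq C$, and a committee size $k$ with $1\le k\le |C|$. For $\ell\in\mathbb{N}$, a set $N'\subseteq N$ is an $\ell$-cohesive group if $|N'|\ge \ell\cdot n/k$ and $|\bigcap_{i\in N'}A_i|\ge \ell$; a $1$-cohesive group is called a cohesive group. A committee $W\subseteq C$ with $|W|=k$ achieves JR degree $c$ if every cohesive group contains at least $c$ voters $i$ with $|A_i\cap W|\ge 1$; the JR degree of $W$ is the largest such $c$. $W$ achieves EJR degree $c$ if for every $\ell\in\{1,\dots,k\}$ every $\ell$-cohesive group contains at least $c$ voters $i$ with $|A_i\cap W|\ge \ell$; the EJR degree of $W$ is the largest such $c$. The maximum JR (resp. EJR) degree of an instance is the maximum of the JR (resp. EJR) degree over all size-$k$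 committees. Only instances with at least one cohesive group are considered. *)

theory Defs
  imports Main "HOL-Library.Disjoint_Sets" Complex_Main
begin

definition valid_instance :: "nat \<Rightarrow> 'a set \<Rightarrow> (nat \<Rightarrow> 'a set) \<Rightarrow> nat \<Rightarrow> bool" where
  "valid_instance n C A k \<longleftrightarrow> n \<ge> 1 \<and> finite C \<and> (\<forall>i<n. A i \<subseteq> C) \<and> 1 \<le> k \<and> k \<le> card C"

definition cohesive :: "nat \<Rightarrow> (nat \<Rightarrow> 'a set) \<Rightarrow> nat \<Rightarrow> nat \<Rightarrow> nat set \<Rightarrow> bool" where
  "cohesive n A k l G \<longleftrightarrow> G \<subseteq> {..<n} \<and> real (card G) \<ge> real l * real n / real k
     \<and> card (\<Inter>i\<in>G. A i) \<ge> l"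

definition committee :: "'a set \<Rightarrow> nat \<Rightarrow> 'a set \<Rightarrow> bool" where
  "committee C k W \<longleftrightarrow> W \<subseteq> C \<and> card W = k"

definition achieves_JR :: "nat \<Rightarrow> (nat \<Rightarrow> 'a set) \<Rightarrow> nat \<Rightarrow> 'a set \<Rightarrow> nat \<Rightarrow> bool" where
  "achieves_JR n A k W c \<longleftrightarrow>
     (\<forall>G. cohesive n A k 1 G \<longrightarrow> card {i\<in>G. card (A i \<inter> W) \<ge> 1} \<ge> c)"

definition achieves_EJR :: "nat \<Rightarrow> (nat \<Rightarrow> 'a set) \<Rightarrow> nat \<Rightarrow> 'a set \<Rightarrow> nat \<Rightarrow> bool" where
  "achieves_EJR n A k W c \<longleftrightarrow>
     (\<forall>l\<in>{1..k}. \<forall>G. cohesive n A k l G \<longrightarrow> card {i\<in>G. card (A i \<inter> W) \<ge> l} \<ge> c)"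

text \<open>Degrees: largest c achieved (bounded by n whenever a cohesive group exists).\<close>
definition JR_degree :: "nat \<Rightarrow> (nat \<Rightarrow> 'a set) \<Rightarrow> nat \<Rightarrow> 'a set \<Rightarrow> nat" where
  "JR_degree n A k W = Max {c. achieves_JR n A k W c}"

definition EJR_degree :: "nat \<Rightarrow> (nat \<Rightarrow> 'a set) \<Rightarrow> nat \<Rightarrow> 'a set \<Rightarrow> nat" where
  "EJR_degree n A k W = Max {c. achieves_EJR n A k W c}"

definition max_JR_degree :: "nat \<Rightarrow> 'a set \<Rightarrow> (nat \<Rightarrow> 'a set) \<Rightarrow> nat \<Rightarrow> nat" where
  "max_JR_degree n C A k = Max (JR_degree n A k ` {W. committee C k W})"

definition max_EJR_degree :: "nat \<Rightarrow> 'a set \<Rightarrow> (nat \<Rightarrow> 'a set) \<Rightarrow> nat \<Rightarrow> nat" where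
  "max_EJR_degree n C A k = Max (EJR_degree n A k ` {W. committee C k W})"

end

theory Submission
  imports Defs
begin

text \<open>
  Take k \<ge> 3 blocks of k voters and give every block its own candidate; the first two
  voters of each block also approve two shared candidates. Electing all k block candidates
  covers every voter, so the maximum JR degree is at least k. The 2k voters approving the
  shared candidates form a 2-cohesive group, so a committee without a shared candidate has
  EJR degree 0. A committee with a shared candidate misses some block candidate, and that
  block is a cohesive group with only two covered voters: its JR and EJR degrees are at
  most 2. Electing both shared candidates gives EJR degree at least 1, since here every l-cohesive
  group has l \<le> 2 and contains a voter approving both. So the maximum EJR degree is 1 or 2,
  the committees optimal for JR and for EJR are disjoint, and k > 2\<gamma> gives all three claims.
\<close>

lemma JR_degree_le:
  assumes "cohesive n A k 1 G" "card {i\<in>G. card (A i \<inter> W) \<ge> 1} \<le> b"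
  shows "JR_degree n A k W \<le> b"
proof -
  have "{c. achieves_JR n A k W c} \<subseteq> {..b}"
    using assms unfolding achieves_JR_def by force
  moreover have "achieves_JR n A k W 0"
    unfolding achieves_JR_def by simp
  ultimately show ?thesis
    unfolding JR_degree_def by (subst Max_le_iff) (auto intro: finite_subset)
qed

lemma JR_degree_ge:
  assumes "cohesive n A k 1 G" "achieves_JR n A k W c"
  shows "c \<le> JR_degree n A k W"
proof -
  have "{c. achieves_JR n A k W c} \<subseteq> {..card {i\<in>G. card (A i \<inter> W) \<ge> 1}}"
    using assms(1) unfolding achieves_JR_def by force
  then show ?thesis
    unfolding JR_degree_def using assms(2) by (auto intro: Max_ge finite_subset)
qed

lemma EJR_degree_le:
  assumes "l \<in> {1..k}" "cohesive n A k l G" "card {i\<in>G. card (A i \<inter> W) \<ge> l} \<le> b"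
  shows "EJR_degree n A k W \<le> b"
proof -
  have "{c. achieves_EJR n A k W c} \<subseteq> {..b}"
    using assms unfolding achieves_EJR_def by force
  moreover have "achieves_EJR n A k W 0"
    unfolding achieves_EJR_def by simp
  ultimately show ?thesis
    unfolding EJR_degree_def by (subst Max_le_iff) (auto intro: finite_subset)
qed

lemma EJR_degree_ge:
  assumes "cohesive n A k 1 G" "1 \<le> k" "achieves_EJR n A k W c"
  shows "c \<le> EJR_degree n A k W"
proof -
  have "{c. achieves_EJR n A k W c} \<subseteq> {..card {i\<in>G. card (A i \<inter> W) \<ge> 1}}"
    using assms(1,2) unfolding achieves_EJR_def by force
  then show ?thesis
    unfolding EJR_degree_def using assms(3) by (auto intro: Max_ge finite_subset)
qed

lemma finite_committees: "finite C \<Longrightarrow> finite {W. committee C k W}"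
  by (rule finite_subset[of _ "Pow C"]) (auto simp: committee_def)

lemma JR_degree_le_max_JR_degree:
  "finite C \<Longrightarrow> committee C k W \<Longrightarrow> JR_degree n A k W \<le> max_JR_degree n C A k"
  unfolding max_JR_degree_def by (simp add: finite_committees)

lemma EJR_degree_le_max_EJR_degree:
  "finite C \<Longrightarrow> committee C k W \<Longrightarrow> EJR_degree n A k W \<le> max_EJR_degree n C A k"
  unfolding max_EJR_degree_def by (simp add: finite_committees)

lemma max_EJR_degree_le:
  assumes "finite C" "committee C k W" "\<And>W. committee C k W \<Longrightarrow> EJR_degree n A k W \<le> b"
  shows "max_EJR_degree n C A k \<le> b"
  unfolding max_EJR_degree_def using assms by (subst Max_le_iff) (auto simp: finite_committees)

lemma cohesive_square_card_ge:
  assumes "cohesive (k * k) A k l G" "0 < k"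
  shows "l * k \<le> card G"
proof -
  have "real l * real (k * k) / real k = real (l * k)"
    using assms(2) by simp
  then show ?thesis
    using assms(1) unfolding cohesive_def by (metis of_nat_le_iff)
qed

lemma achieves_JR_if_all_ballots_met:
  assumes "finite W" "\<forall>i<n. A i \<inter> W \<noteq> {}" "real c \<le> real n / real k"
  shows "achieves_JR n A k W c"
  unfolding achieves_JR_def
proof (intro allI impI)
  fix G assume G: "cohesive n A k 1 G"
  then have "{i\<in>G. card (A i \<inter> W) \<ge> 1} = G"
    using assms(1,2) unfolding cohesive_def by (force simp: Suc_le_eq card_gt_0_iff)
  moreover have "real c \<le> real (card G)"
    using G assms(3) unfolding cohesive_def by simp
  ultimately show "c \<le> card {i\<in>G. card (A i \<inter> W) \<ge> 1}"
    by simp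
qed

text \<open>Voter i sits in block i div k at seat i mod k; the shared candidates are k and k + 1.\<close>

definition block_ballots :: "nat \<Rightarrow> nat \<Rightarrow> nat set" where
  "block_ballots k i = insert (i div k) (if i mod k < 2 then {k, Suc k} else {})"

lemma block_ballots_subset: "i < k * k \<Longrightarrow> block_ballots k i \<subseteq> {..<k + 2}"
  by (auto simp: block_ballots_def less_mult_imp_div_less)

lemma block_ballots_back_seat: "2 \<le> i mod k \<Longrightarrow> block_ballots k i = {i div k}"
  by (simp add: block_ballots_def)

lemma block_ballots_front_seat: "i mod k < 2 \<Longrightarrow> {k, Suc k} \<subseteq> block_ballots k i"
  by (simp add: block_ballots_def)

lemma block_ballots_other_candidate:
  "c \<in> block_ballots k i \<Longrightarrow> c \<notin> {k, Suc k} \<Longrightarrow> i div k = c"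
  by (auto simp: block_ballots_def split: if_splits)

lemma Collect_div_eq_atLeastLessThan:
  fixes k :: nat
  assumes "0 < k"
  shows "{i. i div k = j} = {j * k..<j * k + k}"
proof (intro set_eqI iffI)
  fix i assume "i \<in> {i. i div k = j}"
  then show "i \<in> {j * k..<j * k + k}"
    using div_mult_mod_eq[of i k] mod_less_divisor[OF assms, of i] by auto
next
  fix i assume "i \<in> {j * k..<j * k + k}"
  then show "i \<in> {i. i div k = j}"
    by (auto intro!: div_nat_eqI simp: mult.commute)
qed

lemma finite_Collect_div_eq: "0 < k \<Longrightarrow> finite {i. i div k = (j::nat)}"
  by (simp add: Collect_div_eq_atLeastLessThan)

lemma card_Collect_div_eq: "0 < k \<Longrightarrow> card {i. i div k = (j::nat)} = k"
  by (simp add: Collect_div_eq_atLeastLessThan)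

lemma inj_on_mixed_radix: "inj_on (\<lambda>(j, r). j * k + r :: nat) (UNIV \<times> {..<k})"
proof (rule inj_onI, clarsimp)
  fix a b c d assume "b < k" "d < k" and "a * k + b = c * k + d"
  then have "(a * k + b) div k = (c * k + d) div k" "(a * k + b) mod k = (c * k + d) mod k"
    by simp_all
  then show "a = c \<and> b = d"
    using \<open>b < k\<close> \<open>d < k\<close> by simp
qed

lemma block_cohesive:
  assumes "j < k"
  shows "cohesive (k * k) (block_ballots k) k 1 {i. i div k = j}"
proof -
  have k: "0 < k"
    using assms by simp
  have "j \<in> (\<Inter>i\<in>{i. i div k = j}. block_ballots k i)"
    by (simp add: block_ballots_def)
  moreover have "j * k \<in> {i. i div k = j}"
    using k by simp
  then have "finite (\<Inter>i\<in>{i. i div k = j}. block_ballots k i)"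
    by (rule finite_subset[OF INT_lower]) (simp add: block_ballots_def)
  ultimately have "1 \<le> card (\<Inter>i\<in>{i. i div k = j}. block_ballots k i)"
    by (metis One_nat_def Suc_leI card_gt_0_iff empty_iff)
  moreover have "{i. i div k = j} \<subseteq> {..<k * k}"
    using assms by (auto simp flip: div_less_iff_less_mult[OF k])
  ultimately show ?thesis
    using k unfolding cohesive_def by (simp add: Collect_div_eq_atLeastLessThan)
qed

lemma front_seats_cohesive:
  assumes "2 \<le> k"
  shows "cohesive (k * k) (block_ballots k) k 2 ((\<lambda>(j, r). j * k + r) ` ({..<k} \<times> {..<2}))"
    (is "cohesive _ _ _ _ ?F")
proof -
  have "?F \<subseteq> {..<k * k}"
  proof clarsimp
    fix j r :: nat assume "j < k" "r < 2"
    then have "j * k + r < Suc j * k"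
      using assms by simp
    also have "\<dots> \<le> k * k"
      using \<open>j < k\<close> by (intro mult_le_mono1) simp
    finally show "j * k + r < k * k" .
  qed
  moreover have "2 \<le> card (\<Inter>i\<in>?F. block_ballots k i)"
  proof -
    have "0 \<in> ?F"
      using assms by force
    then have "finite (\<Inter>i\<in>?F. block_ballots k i)"
      by (rule finite_subset[OF INT_lower]) (simp add: block_ballots_def)
    moreover have "{k, Suc k} \<subseteq> (\<Inter>i\<in>?F. block_ballots k i)"
      using assms by (auto simp: block_ballots_def)
    ultimately show ?thesis
      by (metis card_mono card_2_iff n_not_Suc_n)
  qed
  moreover have "card ?F = 2 * k"
    using assms by (subst card_image) (auto intro: inj_on_subset[OF inj_on_mixed_radix])
  ultimately show ?thesis
    unfolding cohesive_def using assms by (auto dest: card_mono)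
qed

lemma cohesive_level_le_2:
  assumes "0 < k" "cohesive (k * k) (block_ballots k) k l G"
  shows "l \<le> 2"
proof (rule ccontr)
  assume "\<not> l \<le> 2"
  let ?I = "\<Inter>i\<in>G. block_ballots k i"
  have "\<not> ?I \<subseteq> {k, Suc k}"
  proof
    assume "?I \<subseteq> {k, Suc k}"
    then have "card ?I \<le> 2"
      using card_mono[of "{k, Suc k}" ?I] by simp
    then show False
      using assms(2) \<open>\<not> l \<le> 2\<close> unfolding cohesive_def by simp
  qed
  then obtain c where "c \<in> ?I" "c \<notin> {k, Suc k}"
    by blast
  then have "G \<subseteq> {i. i div k = c}"
    using block_ballots_other_candidate by blast
  then have "card G \<le> k"
    using card_mono[OF finite_Collect_div_eq[OF assms(1)]] card_Collect_div_eq[OF assms(1)] by metis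
  moreover have "3 * k \<le> l * k"
    using \<open>\<not> l \<le> 2\<close> by (intro mult_le_mono1) simp
  ultimately show False
    using cohesive_square_card_ge[OF assms(2,1)] assms(1) by linarith
qed

lemma cohesive_has_front_seat:
  assumes "2 \<le> k" "1 \<le> l" "cohesive (k * k) (block_ballots k) k l G"
  shows "\<exists>i\<in>G. i mod k < 2"
proof (rule ccontr)
  assume no_front: "\<not> (\<exists>i\<in>G. i mod k < 2)"
  have k: "0 < k"
    using assms(1) by simp
  let ?I = "\<Inter>i\<in>G. block_ballots k i"
  have "?I \<noteq> {}"
    using assms(2,3) unfolding cohesive_def by auto
  then obtain c where "c \<in> ?I"
    by blast
  then have "G \<subseteq> {i. i div k = c}"
    using no_front block_ballots_back_seat by (force simp: not_less)
  moreover have "{c * k, c * k + 1} \<subseteq> {i. i div k = c}"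
    using assms(1) div_mult_self3[of k c 1] by auto
  moreover have "G \<inter> {c * k, c * k + 1} = {}"
    using no_front assms(1) mod_mult_self3[of c k 1] by auto
  ultimately have "card G + 2 \<le> k"
    using card_mono[OF finite_Collect_div_eq[OF k], of "G \<union> {c * k, c * k + 1}"]
      card_Collect_div_eq[OF k]
    by (simp add: card_Un_disjoint finite_subset[OF _ finite_Collect_div_eq[OF k]])
  moreover have "1 * k \<le> l * k"
    using assms(2) by (rule mult_le_mono1)
  ultimately show False
    using cohesive_square_card_ge[OF assms(3) k] by linarith
qed

lemma achieves_EJR_1_if_shared_elected:
  assumes "2 \<le> k" "finite W" "{k, Suc k} \<subseteq> W"
  shows "achieves_EJR (k * k) (block_ballots k) k W 1"
  unfolding achieves_EJR_def
proof (intro ballI allI impI)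
  fix l G assume l: "l \<in> {1..k}" and G: "cohesive (k * k) (block_ballots k) k l G"
  then obtain i where i: "i \<in> G" "i mod k < 2"
    using cohesive_has_front_seat assms(1) by force
  then have "{k, Suc k} \<subseteq> block_ballots k i \<inter> W"
    using assms(3) block_ballots_front_seat by blast
  then have "2 \<le> card (block_ballots k i \<inter> W)"
    using card_mono[of "block_ballots k i \<inter> W" "{k, Suc k}"] assms(2) by simp
  moreover have "l \<le> 2"
    using cohesive_level_le_2[OF _ G] assms(1) by simp
  ultimately have "i \<in> {i \<in> G. l \<le> card (block_ballots k i \<inter> W)}"
    using i(1) by simp
  moreover have "finite G"
    using G finite_subset unfolding cohesive_def by blast
  ultimately show "1 \<le> card {i \<in> G. l \<le> card (block_ballots k i \<inter> W)}"
    by (auto simp: Suc_le_eq card_gt_0_iff)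
qed

lemma EJR_degree_eq_0_if_no_shared:
  assumes "2 \<le> k" "k \<notin> W" "Suc k \<notin> W"
  shows "EJR_degree (k * k) (block_ballots k) k W = 0"
proof -
  have "\<not> 2 \<le> card (block_ballots k i \<inter> W)" for i
  proof -
    have "block_ballots k i \<inter> W \<subseteq> {i div k}"
      using assms(2,3) by (auto simp: block_ballots_def)
    then have "card (block_ballots k i \<inter> W) \<le> card {i div k}"
      by (rule card_mono[rotated]) simp
    then show ?thesis
      by simp
  qed
  then show ?thesis
    using EJR_degree_le[OF _ front_seats_cohesive[OF assms(1)], of W 0] assms(1) by simp
qed

lemma card_covered_in_block_le_2:
  assumes "j \<notin> W"
  shows "card {i \<in> {i. i div k = j}. 1 \<le> card (block_ballots k i \<inter> W)} \<le> 2"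
proof -
  have "{i \<in> {i. i div k = j}. 1 \<le> card (block_ballots k i \<inter> W)} \<subseteq> {j * k, j * k + 1}"
  proof
    fix i assume "i \<in> {i \<in> {i. i div k = j}. 1 \<le> card (block_ballots k i \<inter> W)}"
    then have i: "i div k = j" "1 \<le> card (block_ballots k i \<inter> W)"
      by simp_all
    have "i mod k < 2"
    proof (rule ccontr)
      assume "\<not> i mod k < 2"
      then have "block_ballots k i \<inter> W = {}"
        using assms i(1) block_ballots_back_seat by simp
      then show False
        using i(2) by simp
    qed
    then show "i \<in> {j * k, j * k + 1}"
      using div_mult_mod_eq[of i k] i(1) by (auto simp: less_2_cases_iff)
  qed
  then have "card {i \<in> {i. i div k = j}. 1 \<le> card (block_ballots k i \<inter> W)}
      \<le> card {j * k, j * k + 1}"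
    by (rule card_mono[rotated]) simp
  also have "\<dots> \<le> 2"
    by (simp add: card_insert_le_m1)
  finally show ?thesis .
qed

lemma block_candidate_missing:
  assumes "committee {..<k + 2} k W" "k \<in> W \<or> Suc k \<in> W"
  obtains j where "j < k" "j \<notin> W"
proof -
  have "\<not> {..<k} \<subseteq> W"
  proof
    assume "{..<k} \<subseteq> W"
    moreover obtain x where "x \<in> W" "x \<notin> {..<k}"
      using assms(2) by auto
    ultimately have "insert x {..<k} \<subseteq> W"
      by simp
    moreover have "finite W"
      using assms(1) finite_subset unfolding committee_def by blast
    ultimately have "card (insert x {..<k}) \<le> card W"
      by (rule card_mono[rotated])
    then show False
      using \<open>x \<notin> {..<k}\<close> assms(1) unfolding committee_def by simp
  qed
  then show ?thesis
    using that by auto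
qed

lemma degrees_le_2_if_shared:
  assumes "committee {..<k + 2} k W" "k \<in> W \<or> Suc k \<in> W"
  shows "JR_degree (k * k) (block_ballots k) k W \<le> 2"
    and "EJR_degree (k * k) (block_ballots k) k W \<le> 2"
proof -
  obtain j where "j < k" "j \<notin> W"
    using block_candidate_missing[OF assms] .
  note block = block_cohesive[OF \<open>j < k\<close>] card_covered_in_block_le_2[OF \<open>j \<notin> W\<close>]
  show "JR_degree (k * k) (block_ballots k) k W \<le> 2"
    using JR_degree_le[OF block] .
  show "EJR_degree (k * k) (block_ballots k) k W \<le> 2"
    using EJR_degree_le[OF _ block] \<open>j < k\<close> by simp
qed

lemma achieves_JR_block_candidates:
  assumes "0 < k"
  shows "achieves_JR (k * k) (block_ballots k) k {..<k} k"
proof (rule achieves_JR_if_all_ballots_met)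
  show "\<forall>i<k * k. block_ballots k i \<inter> {..<k} \<noteq> {}"
    by (auto simp: block_ballots_def less_mult_imp_div_less)
  show "real k \<le> real (k * k) / real k"
    using assms by simp
qed simp

lemma valid_instance_block_ballots:
  "1 \<le> k \<Longrightarrow> valid_instance (k * k) {..<k + 2} (block_ballots k) k"
  unfolding valid_instance_def using block_ballots_subset by simp

lemma max_JR_degree_block_ballots_ge:
  assumes "0 < k"
  shows "k \<le> max_JR_degree (k * k) {..<k + 2} (block_ballots k) k"
proof -
  have "k \<le> JR_degree (k * k) (block_ballots k) k {..<k}"
    using JR_degree_ge[OF block_cohesive[OF assms] achieves_JR_block_candidates[OF assms]] .
  also have "\<dots> \<le> max_JR_degree (k * k) {..<k + 2} (block_ballots k) k"
    by (rule JR_degree_le_max_JR_degree) (auto simp: committee_def)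
  finally show ?thesis .
qed

lemma max_EJR_degree_block_ballots_ge_1:
  assumes "2 \<le> k"
  shows "1 \<le> max_EJR_degree (k * k) {..<k + 2} (block_ballots k) k"
proof -
  let ?W = "{k, Suc k} \<union> {..<k - 2}"
  have "1 \<le> EJR_degree (k * k) (block_ballots k) k ?W"
    using assms
    by (intro EJR_degree_ge[OF block_cohesive[of 0] _ achieves_EJR_1_if_shared_elected]) auto
  also have "\<dots> \<le> max_EJR_degree (k * k) {..<k + 2} (block_ballots k) k"
    using assms by (intro EJR_degree_le_max_EJR_degree) (auto simp: committee_def card_Un_disjoint)
  finally show ?thesis .
qed

lemma max_EJR_degree_block_ballots_le_2:
  assumes "2 \<le> k"
  shows "max_EJR_degree (k * k) {..<k + 2} (block_ballots k) k \<le> 2"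
proof (rule max_EJR_degree_le)
  show "committee {..<k + 2} k {..<k}"
    by (auto simp: committee_def)
  fix W assume "committee {..<k + 2} k W"
  then show "EJR_degree (k * k) (block_ballots k) k W \<le> 2"
    using degrees_le_2_if_shared(2) EJR_degree_eq_0_if_no_shared[OF assms]
    by (cases "k \<in> W \<or> Suc k \<in> W") auto
qed simp

lemma JR_degree_le_2_if_EJR_degree_pos:
  assumes "2 \<le> k" "committee {..<k + 2} k W" "1 \<le> EJR_degree (k * k) (block_ballots k) k W"
  shows "JR_degree (k * k) (block_ballots k) k W \<le> 2"
proof -
  have "k \<in> W \<or> Suc k \<in> W"
    using assms(3) EJR_degree_eq_0_if_no_shared[OF assms(1), of W] by auto
  then show ?thesis
    using degrees_le_2_if_shared(1)[OF assms(2)] by blast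
qed

lemma EJR_degree_eq_0_if_JR_degree_ge_3:
  assumes "2 \<le> k" "committee {..<k + 2} k W" "3 \<le> JR_degree (k * k) (block_ballots k) k W"
  shows "EJR_degree (k * k) (block_ballots k) k W = 0"
proof -
  have "k \<notin> W" "Suc k \<notin> W"
    using assms(3) degrees_le_2_if_shared(1)[OF assms(2)] by auto
  then show ?thesis
    using EJR_degree_eq_0_if_no_shared[OF assms(1)] by blast
qed

theorem proposition1:
  fixes \<gamma> :: real
  assumes "\<gamma> > 0"
  shows "\<exists>(n::nat) (C::nat set) (A::nat \<Rightarrow> nat set) (k::nat).
     valid_instance n C A k \<and> (\<exists>G. cohesive n A k 1 G) \<and>
     real (max_JR_degree n C A k) / real (max_EJR_degree n C A k) > \<gamma> \<and>
     (\<forall>W. committee C k W \<and> EJR_degree n A k W = max_EJR_degree n C A k \<longrightarrow>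
          real (JR_degree n A k W) \<le> real (max_JR_degree n C A k) / \<gamma>) \<and>
     (\<forall>W. committee C k W \<and> JR_degree n A k W = max_JR_degree n C A k \<longrightarrow>
          real (EJR_degree n A k W) \<le> real (max_EJR_degree n C A k) / \<gamma>)"
proof -
  define k where "k = nat \<lceil>2 * \<gamma>\<rceil> + 3"
  have k: "3 \<le> k" "2 * \<gamma> < real k"
    unfolding k_def by linarith+
  define MJ where "MJ = max_JR_degree (k * k) {..<k + 2} (block_ballots k) k"
  define ME where "ME = max_EJR_degree (k * k) {..<k + 2} (block_ballots k) k"
  have MJ: "k \<le> MJ" and ME: "1 \<le> ME" "ME \<le> 2"
    unfolding MJ_def ME_def using k max_JR_degree_block_ballots_ge max_EJR_degree_block_ballots_ge_1
      max_EJR_degree_block_ballots_le_2 by simp_all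
  have "\<gamma> < real MJ / 2"
    using k MJ by linarith
  also have "\<dots> \<le> real MJ / real ME"
    using ME by (intro divide_left_mono) auto
  finally have ratio: "\<gamma> < real MJ / real ME" .
  have "2 \<le> real MJ / \<gamma>"
    using k MJ assms by (simp add: pos_le_divide_eq)
  then have "real (JR_degree (k * k) (block_ballots k) k W) \<le> real MJ / \<gamma>"
    if "committee {..<k + 2} k W" "EJR_degree (k * k) (block_ballots k) k W = ME" for W
    using JR_degree_le_2_if_EJR_degree_pos[of k W] that ME(1) k(1) by simp
  moreover have "real (EJR_degree (k * k) (block_ballots k) k W) \<le> real ME / \<gamma>"
    if "committee {..<k + 2} k W" "JR_degree (k * k) (block_ballots k) k W = MJ" for W
    using EJR_degree_eq_0_if_JR_degree_ge_3[of k W] that MJ k(1) assms by simp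
  moreover have "valid_instance (k * k) {..<k + 2} (block_ballots k) k"
    using valid_instance_block_ballots k(1) by simp
  moreover have "cohesive (k * k) (block_ballots k) k 1 {i. i div k = 0}"
    using block_cohesive k(1) by simp
  ultimately show ?thesis
    using ratio unfolding MJ_def ME_def by blast
qed

end
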